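(* Let $\mathcal{M}=(E,\rho)$ be a $q$-matroid and $\mathcal{Z}(\mathcal{M})$ its set of cyclic flats. Then $(\mathcal{Z}(\mathcal{M}),\le)$ is a lattice with meet and join $Z_1\wedge Z_2=\mathrm{cyc}(Z_1\cap Z_2)$ and $Z_1\vee Z_2=\mathrm{cl}(Z_1+Z_2)$. Moreover $\rho(Z_1\wedge Z_2)=\rho(Z_1\cap Z_2)-\dim\big((Z_1\cap Z_2)/(Z_1\wedge Z_2)\big)$ and $\rho(Z_1\vee Z_2)=\rho(Z_1+Z_2)$, and consequently \[ \rho(Z_1)+\rho(Z_2)\ge\rho(Z_1\vee Z_2)+\rho(Z_1\wedge Z_2)+\dim\big((Z_1\cap Z_2)/(Z_1\wedge Z_2)\big) \] for all $Z_1,Z_2\in\mathcal{Z}(\mathcal{M})$.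
   Context: Let $\mathbb{F}=\mathbb{F}_q$. A $q$-matroid is $\mathcal{M}=(E,\rho)$, $E$ a finite-dimensional $\mathbb{F}$-vector space, $\rho$ from subspaces to $\mathbb{Z}_{\ge0}$ with $0\le\rho(V)\le\dim V$, monotone and submodular. Flat: $\rho(F+\langle x\rangle)>\rho(F)$ for all $x\notin F$. Closure: $\mathrm{cl}(V)=\sum\{\langle x\rangle:\rho(V+\langle x\rangle)=\rho(V)\}$. Cyclic core: $\mathrm{cyc}(V)=\{x\in V\mid\rho(W)=\rho(V)\text{ for all }W\le V\text{ with }W+\langle x\rangle=V\}$; $V$ is cyclic if $\mathrm{cyc}(V)=V$. A cyclic flat is a subspace that is both a flat and cyclic. *)

theory Defs
  imports Complex_Main
begin

text \<open>Subspaces are sets of vectors; the sum of subspaces V + W is span (V \<union> W),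
  and the span of x is span {x}.\<close>

definition subspaces_of :: "('f::field \<Rightarrow> 'v::ab_group_add \<Rightarrow> 'v) \<Rightarrow> 'v set \<Rightarrow> 'v set set" where
  "subspaces_of scale E = {V. module.subspace scale V \<and> V \<subseteq> E}"

definition ssum :: "('f::field \<Rightarrow> 'v::ab_group_add \<Rightarrow> 'v) \<Rightarrow> 'v set \<Rightarrow> 'v set \<Rightarrow> 'v set" where
  "ssum scale V W = module.span scale (V \<union> W)"

definition qmatroid :: "('f::field \<Rightarrow> 'v::ab_group_add \<Rightarrow> 'v) \<Rightarrow> 'v set \<Rightarrow> ('v set \<Rightarrow> nat) \<Rightarrow> bool" where
  "qmatroid scale E rho \<longleftrightarrow>
     vector_space scale \<and> finite (UNIV :: 'f set) \<and>
     module.subspace scale E \<and>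
     (\<exists>B. finite B \<and> B \<subseteq> E \<and> module.span scale B = E) \<and>
     (\<forall>V\<in>subspaces_of scale E. rho V \<le> vector_space.dim scale V) \<and>
     (\<forall>V\<in>subspaces_of scale E. \<forall>W\<in>subspaces_of scale E. V \<subseteq> W \<longrightarrow> rho V \<le> rho W) \<and>
     (\<forall>V\<in>subspaces_of scale E. \<forall>W\<in>subspaces_of scale E.
        rho (ssum scale V W) + rho (V \<inter> W) \<le> rho V + rho W)"

definition is_flat :: "('f::field \<Rightarrow> 'v::ab_group_add \<Rightarrow> 'v) \<Rightarrow> 'v set \<Rightarrow> ('v set \<Rightarrow> nat) \<Rightarrow> 'v set \<Rightarrow> bool" where
  "is_flat scale E rho F \<longleftrightarrow> F \<in> subspaces_of scale E \<and>
     (\<forall>x \<in> E - F. rho (ssum scale F (module.span scale {x})) > rho F)"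

definition qcl :: "('f::field \<Rightarrow> 'v::ab_group_add \<Rightarrow> 'v) \<Rightarrow> 'v set \<Rightarrow> ('v set \<Rightarrow> nat) \<Rightarrow> 'v set \<Rightarrow> 'v set" where
  "qcl scale E rho V = module.span scale
     (\<Union>{module.span scale {x} | x. x \<in> E \<and> rho (ssum scale V (module.span scale {x})) = rho V})"

definition qcyc :: "('f::field \<Rightarrow> 'v::ab_group_add \<Rightarrow> 'v) \<Rightarrow> ('v set \<Rightarrow> nat) \<Rightarrow> 'v set \<Rightarrow> 'v set" where
  "qcyc scale rho V = {x \<in> V. \<forall>W. module.subspace scale W \<and> W \<subseteq> V \<and>
       ssum scale W (module.span scale {x}) = V \<longrightarrow> rho W = rho V}"

definition is_cyclic :: "('f::field \<Rightarrow> 'v::ab_group_add \<Rightarrow> 'v) \<Rightarrow> ('v set \<Rightarrow> nat) \<Rightarrow> 'v set \<Rightarrow> bool" where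
  "is_cyclic scale rho V \<longleftrightarrow> qcyc scale rho V = V"

definition cyclic_flats :: "('f::field \<Rightarrow> 'v::ab_group_add \<Rightarrow> 'v) \<Rightarrow> 'v set \<Rightarrow> ('v set \<Rightarrow> nat) \<Rightarrow> 'v set set" where
  "cyclic_flats scale E rho = {Z. is_flat scale E rho Z \<and> is_cyclic scale rho Z}"

end

theory Submission
  imports Defs
begin

text \<open>The cyclic core of a subspace V is the intersection of V with those hyperplanes of V
  on which the rank drops. Passing from V to its cyclic core, one hyperplane at a time, loses
  one unit of rank per dimension, so rho (cyc V) = rho V - dim (V / cyc V); and every cyclic
  subspace of V lies in cyc V. Hence the cyclic core of a flat is the largest cyclic flat below
  it, and since Z1 \<inter> Z2 is a flat, cyc (Z1 \<inter> Z2) is the meet. Dually the closure preserves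
  rank and is the least flat above a subspace; the closure of the sum of two cyclic subspaces
  is again cyclic, which gives the join. The inequality is then submodularity of rho applied
  to Z1 and Z2.\<close>

context vector_space
begin

lemma span_subspace_eq [simp]: "subspace V \<Longrightarrow> span V = V"
  by (simp add: span_eq_iff)

lemma span_Un_span: "span (A \<union> span B) = span (A \<union> B)"
proof -
  have "A \<union> span B \<subseteq> span (A \<union> B)"
    using span_mono[of B "A \<union> B"] span_superset[of "A \<union> B"] by blast
  moreover have "A \<union> B \<subseteq> span (A \<union> span B)"
    using span_superset[of "A \<union> span B"] span_superset[of B] by blast
  ultimately show ?thesis
    unfolding span_eq by blast
qed

lemma span_UN_span_singleton: "span (\<Union>x\<in>S. span {x}) = span S"
proof -
  have "(\<Union>x\<in>S. span {x}) \<subseteq> span S"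
    using span_mono[of "{_}" S] by blast
  moreover have "S \<subseteq> (\<Union>x\<in>S. span {x})"
    using span_base[of _ "{_}"] by blast
  ultimately show ?thesis
    unfolding span_eq using span_superset by blast
qed

lemma span_insert_subspace: "subspace V \<Longrightarrow> x \<in> V \<Longrightarrow> span (insert x V) = V"
  by (simp add: span_redundant span_base)

lemma span_insert_Int:
  assumes W: "subspace W" and Z: "subspace Z" and z: "z \<in> Z" and ZW: "Z \<subseteq> span (insert z W)"
  shows "span (insert z (Z \<inter> W)) = Z"
proof
  show "span (insert z (Z \<inter> W)) \<subseteq> Z"
    using z Z span_minimal[of "insert z (Z \<inter> W)" Z] by auto
  show "Z \<subseteq> span (insert z (Z \<inter> W))"
  proof
    fix a assume a: "a \<in> Z"
    then obtain k where k: "a - k *s z \<in> W"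
      using ZW span_breakdown_eq[of a z W] W by auto
    moreover have "a - k *s z \<in> Z"
      using a z Z by (simp add: subspace_diff subspace_scale)
    ultimately have "a - k *s z \<in> span (Z \<inter> W)"
      using span_base by blast
    then show "a \<in> span (insert z (Z \<inter> W))"
      using span_breakdown_eq by blast
  qed
qed

lemma span_insert_exchange:
  assumes W: "subspace W" and y: "y \<in> span (insert x W)" "y \<notin> W"
  shows "span (insert y W) = span (insert x W)"
proof -
  have "x \<in> span (insert y W)"
    using in_span_insert[of y x W] y W by simp
  then show ?thesis
    using y span_superset[of "insert x W"] span_superset[of "insert y W"]
    unfolding span_eq by blast
qed

end

locale q_matroid = vector_space scale
  for scale :: "'f::field \<Rightarrow> 'v::ab_group_add \<Rightarrow> 'v" (infixr "*s" 75) +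
  fixes E :: "'v set" and rho :: "'v set \<Rightarrow> nat"
  assumes qmatroid: "qmatroid scale E rho"
begin

abbreviation subspace_E :: "'v set \<Rightarrow> bool" where
  "subspace_E V \<equiv> subspace V \<and> V \<subseteq> E"

lemma subspace_E_span: "S \<subseteq> E \<Longrightarrow> subspace_E (span S)"
  using qmatroid span_minimal by (auto simp: qmatroid_def)

lemma rho_le_dim: "subspace_E V \<Longrightarrow> rho V \<le> dim V"
  using qmatroid by (simp add: qmatroid_def subspaces_of_def)

lemma rho_mono: "subspace_E V \<Longrightarrow> subspace_E W \<Longrightarrow> V \<subseteq> W \<Longrightarrow> rho V \<le> rho W"
  using qmatroid by (simp add: qmatroid_def subspaces_of_def)

lemma rho_submodular:
  "subspace_E V \<Longrightarrow> subspace_E W \<Longrightarrow> rho (span (V \<union> W)) + rho (V \<inter> W) \<le> rho V + rho W"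
  using qmatroid by (simp add: qmatroid_def subspaces_of_def ssum_def)

lemma ssum_span_singleton: "ssum scale V (span {x}) = span (insert x V)"
  using span_Un_span[of V "{x}"] by (simp add: ssum_def)

lemma independent_finite: "independent S \<Longrightarrow> S \<subseteq> E \<Longrightarrow> finite S"
  using qmatroid independent_span_bound by (auto simp: qmatroid_def)

lemma basis_subspace_E:
  assumes "subspace_E V"
  obtains B where "B \<subseteq> V" "independent B" "span B = V" "finite B" "card B = dim V"
proof -
  obtain B where B: "B \<subseteq> V" "independent B" "V \<subseteq> span B" "card B = dim V"
    using basis_exists by blast
  have "span B = V"
    using B assms span_minimal[of B V] span_superset by blast
  moreover have "finite B"
    using B assms independent_finite by blast
  ultimately show ?thesis
    using B that by blast
qed

lemma subspace_E_extend:
  assumes A: "subspace_E A" and V: "subspace_E V" and AV: "A \<subseteq> V"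
  obtains T where "finite T" "T \<subseteq> V" "span (A \<union> T) = V" "card T + dim A = dim V"
proof -
  obtain BA where BA: "BA \<subseteq> A" "independent BA" "span BA = A" "finite BA" "card BA = dim A"
    using basis_subspace_E A by blast
  obtain BV where BV: "BA \<subseteq> BV" "BV \<subseteq> V" "independent BV" "V \<subseteq> span BV"
    using maximal_independent_subset_extend[of BA V] BA AV by blast
  have "finite BV"
    using BV V independent_finite by blast
  have "card BV = dim V"
    using BV basis_card_eq_dim by blast
  then have card: "card (BV - BA) + dim A = dim V"
    using BA BV(1) \<open>finite BV\<close> card_Diff_subset card_mono by (metis le_add_diff_inverse2)
  have "span (A \<union> (BV - BA)) = V"
  proof
    show "span (A \<union> (BV - BA)) \<subseteq> V"
      using AV BV V span_minimal[of "A \<union> (BV - BA)" V] by auto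
    show "V \<subseteq> span (A \<union> (BV - BA))"
      using BV(4) BA(1) span_mono[of BV "A \<union> (BV - BA)"] by blast
  qed
  then show ?thesis
    using that[of "BV - BA"] \<open>finite BV\<close> BV card by auto
qed

lemma dim_le_subspace_E: "subspace_E A \<Longrightarrow> subspace_E V \<Longrightarrow> A \<subseteq> V \<Longrightarrow> dim A \<le> dim V"
  by (metis subspace_E_extend le_add2)

lemma dim_span_insert:
  assumes S: "subspace_E S" and x: "x \<in> E" "x \<notin> S"
  shows "dim (span (insert x S)) = dim S + 1"
proof -
  obtain B where B: "B \<subseteq> S" "independent B" "span B = S" "finite B" "card B = dim S"
    using basis_subspace_E S by blast
  have "x \<notin> B"
    using B x by auto
  have "independent (insert x B)"
    using B x independent_insertI by auto
  moreover have "span (insert x B) = span (insert x S)"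
    using B span_Un_span[of "{x}" B] span_Un_span[of "{x}" S] S by simp
  ultimately have "dim (span (insert x S)) = card (insert x B)"
    by (metis dim_eq_card dim_span)
  then show ?thesis
    using B \<open>x \<notin> B\<close> by simp
qed

lemma rho_span_insert_le:
  assumes V: "subspace_E V" and x: "x \<in> E"
  shows "rho (span (insert x V)) \<le> rho V + 1"
proof -
  have sx: "subspace_E (span {x})"
    using x subspace_E_span by simp
  have "rho (span {x}) \<le> 1"
    using rho_le_dim[OF sx] dim_le_card'[of "{x}"] by simp
  moreover have "rho (span (V \<union> span {x})) \<le> rho V + rho (span {x})"
    using rho_submodular[OF V sx] by linarith
  ultimately show ?thesis
    using span_Un_span[of V "{x}"] by simp
qed

lemma rho_span_Un_le:
  assumes A: "subspace_E A"
  shows "finite T \<Longrightarrow> T \<subseteq> E \<Longrightarrow> rho (span (A \<union> T)) \<le> rho A + card T"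
proof (induction T rule: finite_induct)
  case empty
  then show ?case
    using A by simp
next
  case (insert t T)
  have "span (A \<union> insert t T) = span (insert t (span (A \<union> T)))"
    using span_Un_span[of "{t}" "A \<union> T"] by (simp add: Un_commute)
  moreover have "rho (span (insert t (span (A \<union> T)))) \<le> rho (span (A \<union> T)) + 1"
    using insert A by (intro rho_span_insert_le subspace_E_span) auto
  ultimately show ?case
    using insert by simp
qed

lemma rho_le_codim:
  assumes "subspace_E A" "subspace_E V" "A \<subseteq> V"
  shows "rho V + dim A \<le> rho A + dim V"
proof -
  obtain T where T: "finite T" "T \<subseteq> V" "span (A \<union> T) = V" "card T + dim A = dim V"
    using subspace_E_extend assms by blast
  moreover have "rho V \<le> rho A + card T"
    using rho_span_Un_le[OF assms(1) T(1)] T assms by auto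
  ultimately show ?thesis
    by linarith
qed

subsection \<open>Flats and closure\<close>

lemma flat_subspace_E: "is_flat scale E rho F \<Longrightarrow> subspace_E F"
  by (simp add: is_flat_def subspaces_of_def)

lemma is_flatI:
  assumes "subspace_E F" "\<And>y. y \<in> E \<Longrightarrow> y \<notin> F \<Longrightarrow> rho F < rho (span (insert y F))"
  shows "is_flat scale E rho F"
  using assms by (simp add: is_flat_def subspaces_of_def ssum_span_singleton)

lemma flat_rho_less:
  assumes F: "is_flat scale E rho F" and A: "subspace_E A" "A \<subseteq> F" and y: "y \<in> E" "y \<notin> F"
  shows "rho A < rho (span (insert y A))"
proof -
  have sF: "subspace_E F"
    using flat_subspace_E[OF F] .
  define Y where "Y = span (insert y A)"
  have sY: "subspace_E Y"
    unfolding Y_def using A y subspace_E_span by auto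
  have "span (F \<union> Y) = span (insert y F)"
    unfolding Y_def span_Un_span using A by (metis Un_insert_right sup.absorb1)
  then have "rho (span (insert y F)) + rho (F \<inter> Y) \<le> rho F + rho Y"
    using rho_submodular[OF sF sY] by simp
  moreover have "rho A \<le> rho (F \<inter> Y)"
    using rho_mono[of A "F \<inter> Y"] A sF sY subspace_inter[of F Y] span_superset[of "insert y A"]
    unfolding Y_def by auto
  moreover have "rho F < rho (span (insert y F))"
    using F y by (simp add: is_flat_def ssum_span_singleton)
  ultimately show ?thesis
    unfolding Y_def by linarith
qed

lemma flat_Int:
  assumes F1: "is_flat scale E rho Z1" and F2: "is_flat scale E rho Z2"
  shows "is_flat scale E rho (Z1 \<inter> Z2)"
proof (rule is_flatI)
  show sI: "subspace_E (Z1 \<inter> Z2)"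
    using flat_subspace_E[OF F1] flat_subspace_E[OF F2] by (auto simp: subspace_inter)
  fix y assume "y \<in> E" "y \<notin> Z1 \<inter> Z2"
  then show "rho (Z1 \<inter> Z2) < rho (span (insert y (Z1 \<inter> Z2)))"
    using flat_rho_less[OF F1 sI] flat_rho_less[OF F2 sI] by blast
qed

definition cl_vectors :: "'v set \<Rightarrow> 'v set" where
  "cl_vectors V = {x \<in> E. rho (span (insert x V)) = rho V}"

lemma qcl_eq_span: "qcl scale E rho V = span (cl_vectors V)"
proof -
  have "{span {x} | x. x \<in> E \<and> rho (ssum scale V (span {x})) = rho V}
      = (\<lambda>x. span {x}) ` cl_vectors V"
    by (auto simp: cl_vectors_def ssum_span_singleton)
  then show ?thesis
    unfolding qcl_def by (simp add: span_UN_span_singleton)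
qed

lemma subspace_E_qcl: "subspace_E (qcl scale E rho V)"
  unfolding qcl_eq_span by (rule subspace_E_span) (auto simp: cl_vectors_def)

lemma subset_qcl: "subspace_E V \<Longrightarrow> V \<subseteq> qcl scale E rho V"
  unfolding qcl_eq_span cl_vectors_def
  using span_insert_subspace span_superset by fastforce

text \<open>Two extensions of V that do not raise the rank meet in a space containing V, so by
  submodularity their sum does not raise the rank either.\<close>

lemma rho_span_Un_cl_vectors:
  assumes V: "subspace_E V"
  shows "finite T \<Longrightarrow> T \<subseteq> cl_vectors V \<Longrightarrow> rho (span (V \<union> T)) = rho V"
proof (induction T rule: finite_induct)
  case empty
  then show ?case
    using V by simp
next
  case (insert t T)
  define X where "X = span (V \<union> T)"
  define Y where "Y = span (insert t V)"
  have tT: "t \<in> E" "T \<subseteq> E"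
    using insert by (auto simp: cl_vectors_def)
  have sX: "subspace_E X" and sY: "subspace_E Y"
    unfolding X_def Y_def using V tT subspace_E_span[of "V \<union> T"] subspace_E_span[of "insert t V"]
    by auto
  have rX: "rho X = rho V" and rY: "rho Y = rho V"
    using insert unfolding X_def Y_def by (auto simp: cl_vectors_def)
  have "V \<subseteq> X \<inter> Y"
    unfolding X_def Y_def using span_superset by blast
  then have "rho V \<le> rho (X \<inter> Y)"
    using rho_mono V sX sY subspace_inter by blast
  moreover have "rho (span (V \<union> insert t T)) + rho (X \<inter> Y) \<le> rho V + rho V"
  proof -
    have "span (X \<union> Y) = span ((V \<union> T) \<union> insert t V)"
      unfolding X_def Y_def span_Un_span
      using span_Un_span[of "insert t V" "V \<union> T"] by (simp add: Un_commute)
    also have "(V \<union> T) \<union> insert t V = V \<union> insert t T"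
      by auto
    finally show ?thesis
      using rho_submodular[OF sX sY] rX rY by simp
  qed
  moreover have "rho V \<le> rho (span (V \<union> insert t T))"
    using V tT span_superset[of "V \<union> insert t T"] by (intro rho_mono subspace_E_span) auto
  ultimately show ?case
    by linarith
qed

lemma rho_qcl: assumes V: "subspace_E V" shows "rho (qcl scale E rho V) = rho V"
proof -
  obtain B where B: "B \<subseteq> cl_vectors V" "independent B" "cl_vectors V \<subseteq> span B"
    using maximal_independent_subset by blast
  have "finite B"
    using B independent_finite by (auto simp: cl_vectors_def)
  have "span (V \<union> B) = span (cl_vectors V)"
    using subset_qcl[OF V] B span_superset span_mono[of B "V \<union> B"]
    unfolding qcl_eq_span span_eq by blast
  then show ?thesis
    using rho_span_Un_cl_vectors[OF V \<open>finite B\<close> B(1)] by (simp add: qcl_eq_span)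
qed

lemma flat_qcl: assumes V: "subspace_E V" shows "is_flat scale E rho (qcl scale E rho V)"
proof (rule is_flatI)
  let ?C = "qcl scale E rho V"
  show "subspace_E ?C"
    by (rule subspace_E_qcl)
  fix y assume y: "y \<in> E" "y \<notin> ?C"
  then have "y \<notin> cl_vectors V"
    using span_superset[of "cl_vectors V"] by (auto simp: qcl_eq_span)
  moreover have "rho V \<le> rho (span (insert y V))"
    using V y span_superset[of "insert y V"] by (intro rho_mono subspace_E_span) auto
  ultimately have "rho ?C < rho (span (insert y V))"
    using y rho_qcl[OF V] by (auto simp: cl_vectors_def)
  also have "\<dots> \<le> rho (span (insert y ?C))"
    using V y subspace_E_qcl subset_qcl[OF V] by (intro rho_mono subspace_E_span span_mono) auto
  finally show "rho ?C < rho (span (insert y ?C))" .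
qed

lemma qcl_least:
  assumes V: "subspace_E V" and F: "is_flat scale E rho F" and VF: "V \<subseteq> F"
  shows "qcl scale E rho V \<subseteq> F"
proof -
  have sF: "subspace_E F"
    using flat_subspace_E[OF F] .
  have "cl_vectors V \<subseteq> F"
    using flat_rho_less[OF F V VF] by (force simp: cl_vectors_def)
  then show ?thesis
    unfolding qcl_eq_span using span_minimal sF by blast
qed

subsection \<open>Cyclic core\<close>

definition rank_drop_hyperplanes :: "'v set \<Rightarrow> 'v set set" where
  "rank_drop_hyperplanes V =
     {W. subspace W \<and> W \<subseteq> V \<and> (\<exists>y. span (insert y W) = V) \<and> rho W < rho V}"

lemma qcyc_iff: "x \<in> qcyc scale rho V \<longleftrightarrow> x \<in> V \<and>
   (\<forall>W. subspace W \<and> W \<subseteq> V \<and> span (insert x W) = V \<longrightarrow> rho W = rho V)"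
  by (simp add: qcyc_def ssum_span_singleton)

lemma qcyc_subset: "qcyc scale rho V \<subseteq> V"
  using qcyc_iff by blast

lemma qcyc_memI:
  assumes V: "subspace_E V" and x: "x \<in> V"
    and hyperplane: "\<And>W. subspace W \<Longrightarrow> W \<subseteq> V \<Longrightarrow> span (insert x W) = V \<Longrightarrow> rho V \<le> rho W"
  shows "x \<in> qcyc scale rho V"
proof -
  have "rho W = rho V" if "subspace W" "W \<subseteq> V" "span (insert x W) = V" for W
    using hyperplane[OF that] rho_mono[of W V] that V by fastforce
  then show ?thesis
    using x qcyc_iff by blast
qed

lemma qcyc_eq_Inter:
  assumes V: "subspace_E V"
  shows "qcyc scale rho V = V \<inter> \<Inter>(rank_drop_hyperplanes V)"
proof (intro equalityI subsetI)
  fix x assume x: "x \<in> qcyc scale rho V"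
  have "x \<in> W" if W: "W \<in> rank_drop_hyperplanes V" for W
  proof (rule ccontr)
    assume "x \<notin> W"
    obtain y where "span (insert y W) = V" and sW: "subspace W" "W \<subseteq> V"
      using W by (auto simp: rank_drop_hyperplanes_def)
    then have "span (insert x W) = V"
      using span_insert_exchange[OF sW(1), of x y] x qcyc_subset \<open>x \<notin> W\<close> by auto
    then have "rho W = rho V"
      using x sW qcyc_iff by blast
    then show False
      using W by (simp add: rank_drop_hyperplanes_def)
  qed
  then show "x \<in> V \<inter> \<Inter>(rank_drop_hyperplanes V)"
    using x qcyc_subset by blast
next
  fix x assume x: "x \<in> V \<inter> \<Inter>(rank_drop_hyperplanes V)"
  show "x \<in> qcyc scale rho V"
  proof (rule qcyc_memI[OF V])
    show "x \<in> V"
      using x by blast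
    fix W assume W: "subspace W" "W \<subseteq> V" "span (insert x W) = V"
    show "rho V \<le> rho W"
    proof (rule ccontr)
      assume "\<not> rho V \<le> rho W"
      then have "W \<in> rank_drop_hyperplanes V"
        using W by (auto simp: rank_drop_hyperplanes_def)
      then have "W = V"
        using x W span_insert_subspace by auto
      then show False
        using \<open>\<not> rho V \<le> rho W\<close> by simp
    qed
  qed
qed

lemma subspace_E_qcyc: "subspace_E V \<Longrightarrow> subspace_E (qcyc scale rho V)"
  using qcyc_eq_Inter[of V]
  by (auto intro!: subspace_inter subspace_Inter simp: rank_drop_hyperplanes_def)

text \<open>A hyperplane W of J through which a cyclic Z \<subseteq> J is completed to J meets Z in a
  hyperplane of Z, which has the rank of Z; submodularity then transfers this to J and W.\<close>

lemma cyclic_rho_le_hyperplane: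
  assumes Z: "subspace_E Z" "is_cyclic scale rho Z" and J: "subspace_E J" "Z \<subseteq> J"
    and W: "subspace W" "W \<subseteq> J" and z: "z \<in> Z" "span (insert z W) = J"
  shows "rho J \<le> rho W"
proof -
  have sW: "subspace_E W"
    using W J by auto
  have "span (insert z (Z \<inter> W)) = Z"
    using span_insert_Int[OF W(1) conjunct1[OF Z(1)] z(1)] z(2) J by auto
  then have "rho (Z \<inter> W) = rho Z"
    using z(1) Z(2) W(1) Z(1) qcyc_iff[of z Z] by (auto simp: is_cyclic_def subspace_inter)
  moreover have "span (Z \<union> W) = J"
  proof
    show "span (Z \<union> W) \<subseteq> J"
      using Z J W span_minimal[of "Z \<union> W" J] by auto
    show "J \<subseteq> span (Z \<union> W)"
      using z span_mono[of "insert z W" "Z \<union> W"] by auto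
  qed
  ultimately show ?thesis
    using rho_submodular[OF Z(1) sW] by simp
qed

lemma cyclic_subset_qcyc:
  assumes Z: "subspace_E Z" "is_cyclic scale rho Z" and V: "subspace_E V" and ZV: "Z \<subseteq> V"
  shows "Z \<subseteq> qcyc scale rho V"
proof
  fix x assume "x \<in> Z"
  then show "x \<in> qcyc scale rho V"
    using ZV cyclic_rho_le_hyperplane[OF Z V ZV] by (intro qcyc_memI[OF V]) auto
qed

text \<open>Cutting A by a rank-drop hyperplane of V that misses x \<in> A removes one dimension and,
  by submodularity, at least one unit of rank.\<close>

lemma qcyc_descend_step:
  assumes V: "subspace_E V" and A: "subspace_E A" "qcyc scale rho V \<subseteq> A" "A \<subseteq> V"
    and x: "x \<in> A" "x \<notin> qcyc scale rho V"
  obtains A' where "subspace_E A'" "qcyc scale rho V \<subseteq> A'" "A' \<subseteq> A"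
    "dim A = dim A' + 1" "rho A' + 1 \<le> rho A"
proof -
  obtain W where W: "subspace W" "W \<subseteq> V" "span (insert x W) = V" "rho W \<noteq> rho V"
    using x A qcyc_iff by blast
  have sW: "subspace_E W"
    using W V by auto
  have "rho W < rho V"
    using W rho_mono[OF sW V] by auto
  have "x \<notin> W"
    using W span_insert_subspace by auto
  have "qcyc scale rho V \<subseteq> W"
    using W \<open>rho W < rho V\<close> qcyc_eq_Inter[OF V] by (auto simp: rank_drop_hyperplanes_def)
  have "span (A \<union> W) = V"
  proof
    show "span (A \<union> W) \<subseteq> V"
      using A W V span_minimal[of "A \<union> W" V] by auto
    show "V \<subseteq> span (A \<union> W)"
      using W(3) x span_mono[of "insert x W" "A \<union> W"] by auto
  qed
  then have rho_cut: "rho (A \<inter> W) + 1 \<le> rho A"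
    using rho_submodular[OF A(1) sW] \<open>rho W < rho V\<close> by simp
  have "span (insert x (A \<inter> W)) = A"
    using span_insert_Int[of W A x] W A x by auto
  then have "dim A = dim (A \<inter> W) + 1"
    using dim_span_insert[of "A \<inter> W" x] A sW V x \<open>x \<notin> W\<close> by (auto simp: subspace_inter)
  then show ?thesis
    using that[of "A \<inter> W"] A sW rho_cut \<open>qcyc scale rho V \<subseteq> W\<close> by (auto simp: subspace_inter)
qed

lemma qcyc_descend:
  assumes V: "subspace_E V"
  shows "n + dim (qcyc scale rho V) \<le> dim V \<Longrightarrow>
    \<exists>A. subspace_E A \<and> qcyc scale rho V \<subseteq> A \<and> A \<subseteq> V \<and> dim A + n = dim V \<and> rho A + n \<le> rho V"
proof (induction n)
  case 0
  then show ?case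
    using V qcyc_subset by auto
next
  case (Suc n)
  then obtain A where A: "subspace_E A" "qcyc scale rho V \<subseteq> A" "A \<subseteq> V"
    "dim A + n = dim V" "rho A + n \<le> rho V"
    by auto
  have "\<not> A \<subseteq> qcyc scale rho V"
    using Suc.prems A dim_le_subspace_E[OF A(1) subspace_E_qcyc[OF V]] by linarith
  then obtain x where "x \<in> A" "x \<notin> qcyc scale rho V"
    by blast
  then obtain A' where "subspace_E A'" "qcyc scale rho V \<subseteq> A'" "A' \<subseteq> A"
    "dim A = dim A' + 1" "rho A' + 1 \<le> rho A"
    using qcyc_descend_step[OF V A(1-3)] by blast
  then show ?case
    using A by (intro exI[of _ A']) auto
qed

lemma rho_qcyc:
  assumes V: "subspace_E V"
  shows "rho (qcyc scale rho V) + dim V = rho V + dim (qcyc scale rho V)"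
proof -
  let ?C = "qcyc scale rho V"
  have sC: "subspace_E ?C"
    using subspace_E_qcyc[OF V] .
  have "dim ?C \<le> dim V"
    using dim_le_subspace_E[OF sC V qcyc_subset] .
  then obtain A where "subspace_E A" "?C \<subseteq> A" "rho A + (dim V - dim ?C) \<le> rho V"
    using qcyc_descend[OF V, of "dim V - dim ?C"] by auto
  then have "rho ?C + (dim V - dim ?C) \<le> rho V"
    using rho_mono[OF sC] by fastforce
  moreover have "rho V + dim ?C \<le> rho ?C + dim V"
    using rho_le_codim[OF sC V qcyc_subset] .
  ultimately show ?thesis
    using \<open>dim ?C \<le> dim V\<close> by linarith
qed

lemma flat_qcyc:
  assumes F: "is_flat scale E rho F"
  shows "is_flat scale E rho (qcyc scale rho F)"
proof (rule is_flatI)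
  let ?C = "qcyc scale rho F"
  have sF: "subspace_E F"
    using flat_subspace_E[OF F] .
  show sC: "subspace_E ?C"
    using subspace_E_qcyc[OF sF] .
  fix y assume y: "y \<in> E" "y \<notin> ?C"
  show "rho ?C < rho (span (insert y ?C))"
  proof (cases "y \<in> F")
    case True
    define A where "A = span (insert y ?C)"
    have sA: "subspace_E A"
      unfolding A_def using sC y subspace_E_span by auto
    have "A \<subseteq> F"
      unfolding A_def using sC True sF qcyc_subset span_minimal[of "insert y ?C" F] by auto
    then have "rho F + dim A \<le> rho A + dim F"
      using rho_le_codim[OF sA sF] by blast
    moreover have "dim A = dim ?C + 1"
      unfolding A_def using dim_span_insert sC y by blast
    ultimately show ?thesis
      using rho_qcyc[OF sF] unfolding A_def by linarith
  next
    case False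
    then show ?thesis
      using flat_rho_less[OF F sC qcyc_subset] y by blast
  qed
qed

text \<open>Adding to W a complement T of cyc V in V raises the rank by at most card T, which by
  rho_qcyc is exactly rho V - rho (cyc V); and W + T is a hyperplane of V completed by x.\<close>

lemma rho_hyperplane_qcyc:
  assumes V: "subspace_E V" and x: "x \<in> qcyc scale rho V"
    and W: "subspace W" "W \<subseteq> qcyc scale rho V" "span (insert x W) = qcyc scale rho V"
  shows "rho (qcyc scale rho V) \<le> rho W"
proof -
  let ?C = "qcyc scale rho V"
  have sC: "subspace_E ?C"
    using subspace_E_qcyc[OF V] .
  have sW: "subspace_E W"
    using W sC by auto
  obtain T where T: "finite T" "T \<subseteq> V" "span (?C \<union> T) = V" "card T + dim ?C = dim V"
    using subspace_E_extend[OF sC V qcyc_subset] by blast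
  define W' where "W' = span (W \<union> T)"
  have sW': "subspace_E W'"
    unfolding W'_def using sW T V subspace_E_span[of "W \<union> T"] by auto
  have W'V: "W' \<subseteq> V"
    unfolding W'_def using W qcyc_subset T V span_minimal[of "W \<union> T" V] by auto
  have "span (insert x W') = V"
  proof
    show "span (insert x W') \<subseteq> V"
      using x W'V qcyc_subset V span_minimal[of "insert x W'" V] by auto
    have "W \<subseteq> W'" "T \<subseteq> W'"
      unfolding W'_def using span_superset[of "W \<union> T"] by auto
    then have "?C \<union> T \<subseteq> span (insert x W')"
      using W(3) span_mono[of "insert x W" "insert x W'"] span_superset[of "insert x W'"] by auto
    then show "V \<subseteq> span (insert x W')"
      using T(3) span_minimal[of "?C \<union> T" "span (insert x W')"] by auto
  qed
  then have "rho W' = rho V"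
    using x qcyc_iff sW' W'V by blast
  moreover have "rho W' \<le> rho W + card T"
    unfolding W'_def using rho_span_Un_le[OF sW T(1)] T V by auto
  ultimately show ?thesis
    using T(4) rho_qcyc[OF V] by linarith
qed

lemma cyclic_qcyc:
  assumes V: "subspace_E V"
  shows "is_cyclic scale rho (qcyc scale rho V)"
  unfolding is_cyclic_def
proof
  let ?C = "qcyc scale rho V"
  have sC: "subspace_E ?C"
    using subspace_E_qcyc[OF V] .
  show "qcyc scale rho ?C \<subseteq> ?C"
    by (rule qcyc_subset)
  show "?C \<subseteq> qcyc scale rho ?C"
  proof
    fix x assume x: "x \<in> ?C"
    then show "x \<in> qcyc scale rho ?C"
      using rho_hyperplane_qcyc[OF V x] by (intro qcyc_memI[OF sC]) auto
  qed
qed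

lemma cyclic_qcl_sum:
  assumes Z1: "subspace_E Z1" "is_cyclic scale rho Z1" and Z2: "subspace_E Z2" "is_cyclic scale rho Z2"
  shows "is_cyclic scale rho (qcl scale E rho (span (Z1 \<union> Z2)))"
  unfolding is_cyclic_def
proof
  let ?V = "span (Z1 \<union> Z2)"
  let ?J = "qcl scale E rho ?V"
  have sV: "subspace_E ?V"
    using Z1 Z2 subspace_E_span by auto
  have sJ: "subspace_E ?J"
    by (rule subspace_E_qcl)
  have ZJ: "Z1 \<subseteq> ?J" "Z2 \<subseteq> ?J"
    using subset_qcl[OF sV] span_superset[of "Z1 \<union> Z2"] by auto
  show "qcyc scale rho ?J \<subseteq> ?J"
    by (rule qcyc_subset)
  show "?J \<subseteq> qcyc scale rho ?J"
  proof
    fix x assume x: "x \<in> ?J"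
    have "rho ?J \<le> rho W" if W: "subspace W" "W \<subseteq> ?J" "span (insert x W) = ?J" for W
    proof (cases "Z1 \<union> Z2 \<subseteq> W")
      case True
      then have "rho ?V \<le> rho W"
        using W sJ span_minimal[of "Z1 \<union> Z2" W] by (intro rho_mono[OF sV]) auto
      then show ?thesis
        using rho_qcl[OF sV] by simp
    next
      case False
      then obtain z where z: "z \<in> Z1 \<or> z \<in> Z2" "z \<notin> W"
        by blast
      then have "span (insert z W) = ?J"
        using span_insert_exchange[OF W(1), of z x] W ZJ by auto
      then show ?thesis
        using cyclic_rho_le_hyperplane[OF Z1 sJ ZJ(1) W(1,2)]
          cyclic_rho_le_hyperplane[OF Z2 sJ ZJ(2) W(1,2)] z(1) by blast
    qed
    then show "x \<in> qcyc scale rho ?J"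
      using x by (intro qcyc_memI[OF sJ])
  qed
qed

subsection \<open>The lattice of cyclic flats\<close>

lemma cyclic_flatsD:
  assumes "Z \<in> cyclic_flats scale E rho"
  shows "subspace_E Z" "is_flat scale E rho Z" "is_cyclic scale rho Z"
  using assms flat_subspace_E by (auto simp: cyclic_flats_def)

lemma qcyc_Int_cyclic_flat:
  assumes "Z1 \<in> cyclic_flats scale E rho" "Z2 \<in> cyclic_flats scale E rho"
  shows "qcyc scale rho (Z1 \<inter> Z2) \<in> cyclic_flats scale E rho"
proof -
  have F: "is_flat scale E rho (Z1 \<inter> Z2)"
    using flat_Int[OF cyclic_flatsD(2)[OF assms(1)] cyclic_flatsD(2)[OF assms(2)]] .
  then have "is_cyclic scale rho (qcyc scale rho (Z1 \<inter> Z2))"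
    using cyclic_qcyc flat_subspace_E by blast
  then show ?thesis
    using flat_qcyc[OF F] by (simp add: cyclic_flats_def)
qed

lemma qcl_sum_cyclic_flat:
  assumes Z1: "Z1 \<in> cyclic_flats scale E rho" and Z2: "Z2 \<in> cyclic_flats scale E rho"
  shows "qcl scale E rho (span (Z1 \<union> Z2)) \<in> cyclic_flats scale E rho"
proof -
  have "subspace_E (span (Z1 \<union> Z2))"
    using cyclic_flatsD(1)[OF Z1] cyclic_flatsD(1)[OF Z2] subspace_E_span[of "Z1 \<union> Z2"] by blast
  moreover have "is_cyclic scale rho (qcl scale E rho (span (Z1 \<union> Z2)))"
    using cyclic_qcl_sum cyclic_flatsD(1,3)[OF Z1] cyclic_flatsD(1,3)[OF Z2] by blast
  ultimately show ?thesis
    using flat_qcl by (simp add: cyclic_flats_def)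
qed

lemma cyclic_flat_le_qcyc_Int:
  assumes "Z1 \<in> cyclic_flats scale E rho" "Z2 \<in> cyclic_flats scale E rho"
    and Z: "Z \<in> cyclic_flats scale E rho" "Z \<subseteq> Z1" "Z \<subseteq> Z2"
  shows "Z \<subseteq> qcyc scale rho (Z1 \<inter> Z2)"
proof (rule cyclic_subset_qcyc[OF cyclic_flatsD(1,3)[OF Z(1)]])
  show "subspace_E (Z1 \<inter> Z2)"
    using cyclic_flatsD(1)[OF assms(1)] cyclic_flatsD(1)[OF assms(2)] by (auto simp: subspace_inter)
  show "Z \<subseteq> Z1 \<inter> Z2"
    using Z by blast
qed

lemma qcl_sum_le_cyclic_flat:
  assumes Z1: "Z1 \<in> cyclic_flats scale E rho" and Z2: "Z2 \<in> cyclic_flats scale E rho"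
    and Z: "Z \<in> cyclic_flats scale E rho" "Z1 \<subseteq> Z" "Z2 \<subseteq> Z"
  shows "qcl scale E rho (span (Z1 \<union> Z2)) \<subseteq> Z"
proof (rule qcl_least[OF subspace_E_span cyclic_flatsD(2)[OF Z(1)]])
  show "Z1 \<union> Z2 \<subseteq> E"
    using cyclic_flatsD(1)[OF Z1] cyclic_flatsD(1)[OF Z2] by blast
  show "span (Z1 \<union> Z2) \<subseteq> Z"
    using Z cyclic_flatsD(1)[OF Z(1)] span_minimal[of "Z1 \<union> Z2" Z] by blast
qed

end

theorem corollary4p2:
  fixes scale :: "'f::field \<Rightarrow> 'v::ab_group_add \<Rightarrow> 'v"
    and E :: "'v set" and rho :: "'v set \<Rightarrow> nat"
  assumes M: "qmatroid scale E rho"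
  shows "\<forall>Z1\<in>cyclic_flats scale E rho. \<forall>Z2\<in>cyclic_flats scale E rho.
    (let Zm = qcyc scale rho (Z1 \<inter> Z2); Zj = qcl scale E rho (ssum scale Z1 Z2);
         d = int (vector_space.dim scale (Z1 \<inter> Z2)) - int (vector_space.dim scale Zm) in
     Zm \<in> cyclic_flats scale E rho \<and> Zm \<subseteq> Z1 \<and> Zm \<subseteq> Z2 \<and>
     (\<forall>Z\<in>cyclic_flats scale E rho. Z \<subseteq> Z1 \<and> Z \<subseteq> Z2 \<longrightarrow> Z \<subseteq> Zm) \<and>
     Zj \<in> cyclic_flats scale E rho \<and> Z1 \<subseteq> Zj \<and> Z2 \<subseteq> Zj \<and>
     (\<forall>Z\<in>cyclic_flats scale E rho. Z1 \<subseteq> Z \<and> Z2 \<subseteq> Z \<longrightarrow> Zj \<subseteq> Z) \<and>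
     int (rho Zm) = int (rho (Z1 \<inter> Z2)) - d \<and>
     rho Zj = rho (ssum scale Z1 Z2) \<and>
     int (rho Z1) + int (rho Z2) \<ge> int (rho Zj) + int (rho Zm) + d)"
proof -
  interpret q_matroid scale E rho
    using M by (simp add: q_matroid_def q_matroid_axioms_def qmatroid_def)
  show ?thesis
  proof (intro ballI, goal_cases)
    case (1 Z1 Z2)
    then have Z1: "subspace_E Z1" and Z2: "subspace_E Z2"
      using cyclic_flatsD by auto
    then have sI: "subspace_E (Z1 \<inter> Z2)" and sV: "subspace_E (span (Z1 \<union> Z2))"
      using subspace_inter subspace_E_span[of "Z1 \<union> Z2"] by auto
    have "Z1 \<union> Z2 \<subseteq> qcl scale E rho (span (Z1 \<union> Z2))"
      using subset_qcl[OF sV] span_superset by blast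
    moreover have "int (rho (qcyc scale rho (Z1 \<inter> Z2))) + int (dim (Z1 \<inter> Z2))
        = int (rho (Z1 \<inter> Z2)) + int (dim (qcyc scale rho (Z1 \<inter> Z2)))"
      using rho_qcyc[OF sI] by linarith
    ultimately show ?case
      unfolding Let_def ssum_def
      using qcyc_Int_cyclic_flat[OF 1] qcyc_subset[of "Z1 \<inter> Z2"] cyclic_flat_le_qcyc_Int[OF 1]
        qcl_sum_cyclic_flat[OF 1] qcl_sum_le_cyclic_flat[OF 1] rho_qcl[OF sV]
        rho_submodular[OF Z1 Z2]
      by (intro conjI) (fact | linarith | blast)+
  qed
qed

end
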